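(* Let $a\in\mathbb{Z}$ and $b\in\mathbb{Z}_{\le0}$. Expand $q^{-\frac12(a-b)}X_4E_{(a,b)}-E_{(a-1,b-1)}$ as a $\mathbb{Z}[q^{\pm\frac12}]$-linear combination of standard monomials. Then every standard monomial $E_{(c,d)}$ occurring with nonzero coefficient satisfies: $c\ge a-1$ if $a>0$ and $c\ge a$ if $a\le0$; moreover $c\le a-b$ if $d\ge0$, and $c-d\le a-b$ if $d<0$.
   Context: Let $\mathcal{T}$ be the quantum torus over $\mathbb{Z}[q^{\pm\frac12}]$ generated by $X_1^{\pm1},X_2^{\pm1}$ with $X_1X_2=qX_2X_1$, with skew field of fractions $\mathcal{F}$. Define $X_k\in\mathcal{F}$ ($k\in\mathbb{Z}$) by $X_{k-1}X_{k+1}=q^{\frac12}X_k+1$ for $k$ odd and $X_{k-1}X_{k+1}=q^2X_k^4+1$ for $k$ even; $\mathcal{A}_q(1,4)$ is the $\mathbb{Z}[q^{\pm\frac12}]$-subalgebra of $\mathcal{F}$ generated by all $X_k$. For $x\in\mathbb{Z}$, $[x]_+=\max(x,0)$. Standard monomials: $E_{(a,b)}=q^{-\frac12ab}X_3^{[-a]_+}X_1^{[a]_+}X_2^{[b]_+}X_0^{[-b]_+}$ for $(a,b)\in\mathbb{Z}^2$; they form a $\mathbb{Z}[q^{\pm\frac12}]$-basis of $\mathcal{A}_q(1,4)$. *)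

theory Defs
  imports Main
begin

text \<open>Ambient division ring 'a plays the role of the skew field F.  The parameter
  Q stands for q^(1/2) (so q = Q^2, q^2 = Q^4), X :: int => 'a is the family X_k.\<close>

definition posp :: "int \<Rightarrow> nat" where
  "posp x = nat (max x 0)"

definition stdmon :: "'a::division_ring \<Rightarrow> (int \<Rightarrow> 'a) \<Rightarrow> int \<Rightarrow> int \<Rightarrow> 'a" where
  "stdmon Q X a b = Q powi (- (a * b)) * X 3 ^ posp (- a) * X 1 ^ posp a
                      * X 2 ^ posp b * X 0 ^ posp (- b)"

definition quantum_torus_gens :: "'a::division_ring \<Rightarrow> 'a \<Rightarrow> 'a \<Rightarrow> bool" where
  "quantum_torus_gens Q X1 X2 \<longleftrightarrow>
     (\<forall>y. Q * y = y * Q) \<and> X1 * X2 = Q^2 * (X2 * X1) \<and>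
     (\<forall>g :: int \<times> int \<times> int \<Rightarrow> int. finite {p. g p \<noteq> 0} \<longrightarrow>
        (\<Sum>(i, a, b)\<in>{p. g p \<noteq> 0}. of_int (g (i, a, b)) * Q powi i * X1 powi a * X2 powi b) = 0
        \<longrightarrow> (\<forall>p. g p = 0))"

definition cluster_seq :: "'a::division_ring \<Rightarrow> (int \<Rightarrow> 'a) \<Rightarrow> bool" where
  "cluster_seq Q X \<longleftrightarrow>
     (\<forall>k. odd k \<longrightarrow> X (k - 1) * X (k + 1) = Q * X k + 1) \<and>
     (\<forall>k. even k \<longrightarrow> X (k - 1) * X (k + 1) = Q ^ 4 * X k ^ 4 + 1)"

end

theory Submission
  imports Defs "HOL-Library.Product_Lexorder"
begin

(* In the quantum torus the monomials Q^i X1^u X2^v are linearly independent, so every element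
   has a well-defined set of exponents (u, v).  The exchange relations write X0, X3 and X4 as
   Laurent polynomials, and counting X1-degrees shows that
   L = q^(-(a-b)/2) X4 E(a,b) - E(a-1,b-1) only involves X1-degrees in [a-1, a-b]; for a <= 0 the
   parts of X1-degree a-1 of the two terms coincide, so the range shrinks to [a, a-b].
   A standard monomial E(c,d) has least X1-degree c and greatest X1-degree c + [-d]_+, each
   attained by a single monomial of least X2-degree d.  Among the E(c,d) occurring in the
   expansion of L, the extreme monomial of the lexicographically extreme one cannot be cancelled
   by the others, so it occurs in L; this turns the degree range of L into the bounds on c and
   c - d. *)
lemma central_power_int:
  fixes c :: "'a::division_ring"
  assumes central: "\<And>z. c * z = z * c"
  shows "c powi i * z = z * c powi i"
proof -
  have inverse_central: "inverse c * z = z * inverse c"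
    by (rule mult_commute_imp_mult_inverse_commute) (simp add: central)
  show ?thesis
    using power_commuting_commutes[OF central] power_commuting_commutes[OF inverse_central]
    by (simp add: power_int_def)
qed

lemma skew_commute_power:
  fixes x y c :: "'a::division_ring"
  assumes yx: "y * x = c * (x * y)" and central: "\<And>z. c * z = z * c"
  shows "y * x ^ n = c ^ n * (x ^ n * y)"
proof (induction n)
  case (Suc n)
  have "y * x ^ Suc n = (y * x ^ n) * x" by (simp only: power_Suc2 mult.assoc)
  also have "\<dots> = c ^ n * (x ^ n * c) * (x * y)" by (simp only: Suc yx mult.assoc)
  also have "\<dots> = c ^ Suc n * (x ^ Suc n * y)"
    by (simp only: central[of "x ^ n", symmetric] power_Suc2 mult.assoc)
  finally show ?case .
qed simp

lemma skew_commute_inverse: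
  fixes x y c :: "'a::division_ring"
  assumes yx: "y * x = c * (x * y)" and central: "\<And>z. c * z = z * c" and "x \<noteq> 0"
  shows "y * inverse x = inverse c * (inverse x * y)"
proof (cases "c = 0")
  case True
  then show ?thesis using yx \<open>x \<noteq> 0\<close> by simp
next
  case False
  have "inverse x * y = inverse x * (y * x) * inverse x" using \<open>x \<noteq> 0\<close> by (simp add: mult.assoc)
  also have "\<dots> = (inverse x * c * x) * (y * inverse x)" by (simp only: yx mult.assoc)
  also have "inverse x * c * x = c * inverse x * x" using central[of "inverse x"] by simp
  also have "\<dots> = c" using \<open>x \<noteq> 0\<close> by (simp add: mult.assoc)
  finally show ?thesis using False by (simp add: mult.assoc[symmetric])
qed

lemma skew_commute_power_int:
  fixes x y c :: "'a::division_ring"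
  assumes yx: "y * x = c * (x * y)" and central: "\<And>z. c * z = z * c" and "x \<noteq> 0"
  shows "y * x powi a = c powi a * (x powi a * y)"
proof (cases "a \<ge> 0")
  case True
  then show ?thesis using skew_commute_power[OF yx central] by (simp add: power_int_def)
next
  case False
  have "\<And>z. inverse c * z = z * inverse c"
    by (rule mult_commute_imp_mult_inverse_commute) (simp add: central)
  with False show ?thesis
    using skew_commute_power[OF skew_commute_inverse[OF yx central \<open>x \<noteq> 0\<close>]]
    by (simp add: power_int_def)
qed

lemma skew_commute_power_int_power_int:
  fixes x y c :: "'a::division_ring"
  assumes yx: "y * x = c * (x * y)" and central: "\<And>z. c * z = z * c"
    and "x \<noteq> 0" "y \<noteq> 0" "c \<noteq> 0"
  shows "y powi b * x powi a = c powi (a * b) * (x powi a * y powi b)"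
proof -
  let ?x = "x powi a" and ?c = "c powi a"
  have central': "\<And>z. ?c * z = z * ?c" by (rule central_power_int[OF central])
  have "y * ?x = ?c * (?x * y)" by (rule skew_commute_power_int[OF yx central \<open>x \<noteq> 0\<close>])
  then have "?x * y = inverse ?c * (y * ?x)" using \<open>c \<noteq> 0\<close> by (simp add: mult.assoc[symmetric])
  then have "?x * y powi b = inverse ?c powi b * (y powi b * ?x)"
    using \<open>y \<noteq> 0\<close> mult_commute_imp_mult_inverse_commute[of ?c] central'
    by (intro skew_commute_power_int) auto
  then have "?c powi b * (?x * y powi b) = (?c powi b * inverse ?c powi b) * (y powi b * ?x)"
    by (simp only: mult.assoc)
  also have "?c powi b * inverse ?c powi b = 1"
    unfolding power_int_inverse by (rule right_inverse) (simp add: \<open>c \<noteq> 0\<close>)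
  finally show ?thesis by (simp add: power_int_mult)
qed

lemma posp_diff: "int (posp x) - int (posp (- x)) = x"
  by (auto simp: posp_def max_def)

locale quantum_torus =
  fixes Q X1 X2 :: "'a::division_ring"
  assumes gens: "quantum_torus_gens Q X1 X2"
begin

lemma Q_central: "Q * y = y * Q"
  using gens by (simp add: quantum_torus_gens_def)

lemma Q_powi_central: "Q powi i * y = y * Q powi i"
  by (rule central_power_int[OF Q_central])

lemma mult_Q_powi_left_commute: "x * (Q powi k * y) = Q powi k * (x * y)"
  by (simp only: mult.assoc[symmetric] Q_powi_central[of k x])

definition mon :: "int \<Rightarrow> int \<Rightarrow> int \<Rightarrow> 'a" where
  "mon i u v = Q powi i * X1 powi u * X2 powi v"

lemma mon_independent:
  assumes "finite S" and "\<And>p. f p \<noteq> 0 \<Longrightarrow> p \<in> S"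
    and "(\<Sum>(i, u, v)\<in>S. of_int (f (i, u, v)) * mon i u v) = 0"
  shows "f p = 0"
proof -
  have "{p. f p \<noteq> 0} \<subseteq> S" using assms(2) by blast
  then have fin: "finite {p. f p \<noteq> 0}" using assms(1) by (rule finite_subset)
  have "(\<Sum>(i, u, v)\<in>{p. f p \<noteq> 0}. of_int (f (i, u, v)) * Q powi i * X1 powi u * X2 powi v)
      = (\<Sum>(i, u, v)\<in>S. of_int (f (i, u, v)) * mon i u v)"
  proof (rule sum.mono_neutral_cong_left)
    show "\<forall>p\<in>S - {p. f p \<noteq> 0}. (case p of (i, u, v) \<Rightarrow> of_int (f (i, u, v)) * mon i u v) = 0"
      by auto
    show "\<And>p. p \<in> {p. f p \<noteq> 0} \<Longrightarrow> (case p of (i, u, v) \<Rightarrow>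
        of_int (f (i, u, v)) * Q powi i * X1 powi u * X2 powi v) =
        (case p of (i, u, v) \<Rightarrow> of_int (f (i, u, v)) * mon i u v)"
      by (auto simp: mon_def mult.assoc)
  qed (use assms(1,2) in auto)
  with assms(3) have "(\<Sum>(i, u, v)\<in>{p. f p \<noteq> 0}.
      of_int (f (i, u, v)) * Q powi i * X1 powi u * X2 powi v) = 0" by simp
  moreover have "\<forall>g :: int \<times> int \<times> int \<Rightarrow> int. finite {p. g p \<noteq> 0} \<longrightarrow>
      (\<Sum>(i, u, v)\<in>{p. g p \<noteq> 0}. of_int (g (i, u, v)) * Q powi i * X1 powi u * X2 powi v) = 0
      \<longrightarrow> (\<forall>p. g p = 0)"
    using gens unfolding quantum_torus_gens_def by (elim conjE)
  ultimately show ?thesis using fin by blast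
qed

lemma mon_neq_zero: "mon i u v \<noteq> 0"
proof
  assume "mon i u v = 0"
  then have zero: "(\<Sum>(i', u', v')\<in>{(i, u, v)}. of_int ((\<lambda>p. if p = (i, u, v) then 1 else 0) (i', u', v'))
      * mon i' u' v') = 0" by simp
  have "(\<lambda>p. if p = (i, u, v) then 1 else 0 :: int) (i, u, v) = 0"
    by (rule mon_independent[OF _ _ zero]) (auto split: if_splits)
  then show False by simp
qed

lemma Q_neq_zero: "Q \<noteq> 0" and X1_neq_zero: "X1 \<noteq> 0" and X2_neq_zero: "X2 \<noteq> 0"
  using mon_neq_zero[of 1 0 0] mon_neq_zero[of 0 1 0] mon_neq_zero[of 0 0 1]
  by (auto simp: mon_def)

lemma generator_powi_add:
  "Q powi (m + n) = Q powi m * Q powi n"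
  "X1 powi (m + n) = X1 powi m * X1 powi n"
  "X2 powi (m + n) = X2 powi m * X2 powi n"
  using Q_neq_zero X1_neq_zero X2_neq_zero by (simp_all add: power_int_add)

lemma X2_X1: "X2 * X1 = Q powi (-2) * (X1 * X2)"
proof -
  have "X1 * X2 = Q^2 * (X2 * X1)" using gens by (simp add: quantum_torus_gens_def)
  then show ?thesis using Q_neq_zero by (simp add: power_int_minus mult.assoc[symmetric])
qed

lemma X2_powi_X1_powi: "X2 powi v * X1 powi u = Q powi (-2 * u * v) * (X1 powi u * X2 powi v)"
proof -
  have "X2 powi v * X1 powi u = (Q powi (-2)) powi (u * v) * (X1 powi u * X2 powi v)"
    using Q_neq_zero
    by (intro skew_commute_power_int_power_int[OF X2_X1 Q_powi_central X1_neq_zero X2_neq_zero]) simp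
  also have "(Q powi (-2)) powi (u * v) = Q powi (-2 * u * v)"
    by (simp only: power_int_mult[symmetric] mult.assoc)
  finally show ?thesis .
qed

lemma mon_mult: "mon i u v * mon j u' v' = mon (i + j - 2 * v * u') (u + u') (v + v')"
proof -
  have "mon i u v * mon j u' v'
      = Q powi i * (Q powi j * (X1 powi u * ((X2 powi v * X1 powi u') * X2 powi v')))"
    by (simp only: mon_def mult_Q_powi_left_commute[of "X2 powi v" j] mult_Q_powi_left_commute[of "X1 powi u" j] mult.assoc)
  also have "\<dots> = Q powi i * (Q powi j * (X1 powi u *
      (Q powi (-2 * u' * v) * (X1 powi u' * X2 powi v) * X2 powi v')))"
    by (simp only: X2_powi_X1_powi)
  also have "\<dots> = (Q powi i * Q powi j * Q powi (-2 * u' * v))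
      * (X1 powi u * X1 powi u') * (X2 powi v * X2 powi v')"
    by (simp only: mult_Q_powi_left_commute[of "X1 powi u"] mult.assoc)
  also have "\<dots> = mon (i + j + -2 * u' * v) (u + u') (v + v')"
    by (simp only: mon_def generator_powi_add)
  also have "i + j + -2 * u' * v = i + j - 2 * v * u'" by simp
  finally show ?thesis .
qed

lemma Q_powi_mult_mon: "Q powi k * mon i u v = mon (k + i) u v"
  by (simp only: mon_def generator_powi_add mult.assoc)

inductive_set mon_span :: "(int \<times> int) set \<Rightarrow> 'a set" for A where
  zero: "0 \<in> mon_span A"
| add_mon: "x \<in> mon_span A \<Longrightarrow> (u, v) \<in> A \<Longrightarrow> x + of_int n * mon i u v \<in> mon_span A"

lemma mon_in_mon_span: "(u, v) \<in> A \<Longrightarrow> mon i u v \<in> mon_span A"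
  using mon_span.add_mon[OF mon_span.zero, of u v A 1 i] by simp

lemma mon_span_mono: "x \<in> mon_span A \<Longrightarrow> A \<subseteq> B \<Longrightarrow> x \<in> mon_span B"
  by (induction rule: mon_span.induct) (auto intro: mon_span.intros)

lemma mon_span_add:
  assumes "x \<in> mon_span A" and "y \<in> mon_span A"
  shows "x + y \<in> mon_span A"
  using assms(2)
proof (induction y rule: mon_span.induct)
  case (add_mon y u v n i)
  then have "x + y + of_int n * mon i u v \<in> mon_span A" by (intro mon_span.add_mon)
  then show ?case by (simp only: add.assoc)
qed (simp add: assms(1))

lemma mon_span_of_int_mult: "x \<in> mon_span A \<Longrightarrow> of_int n * x \<in> mon_span A"
proof (induction x rule: mon_span.induct)
  case (add_mon x u v m i)
  then have "of_int n * x + of_int (n * m) * mon i u v \<in> mon_span A" by (intro mon_span.add_mon)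
  then show ?case by (simp only: distrib_left of_int_mult mult.assoc)
qed (simp add: mon_span.zero)

lemma mon_span_diff: "x \<in> mon_span A \<Longrightarrow> y \<in> mon_span A \<Longrightarrow> x - y \<in> mon_span A"
  using mon_span_add[OF _ mon_span_of_int_mult[of y A "-1"]] by simp

lemma mon_span_sum:
  "finite S \<Longrightarrow> (\<And>s. s \<in> S \<Longrightarrow> f s \<in> mon_span A) \<Longrightarrow> sum f S \<in> mon_span A"
  by (induction S rule: finite_induct) (auto intro: mon_span_add mon_span.zero)

lemma mon_mult_mon_span:
  assumes "y \<in> mon_span B" and "\<And>u' v'. (u', v') \<in> B \<Longrightarrow> (u + u', v + v') \<in> C"
  shows "mon i u v * y \<in> mon_span C"
  using assms(1)
proof (induction y rule: mon_span.induct)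
  case (add_mon y u' v' n j)
  have "mon i u v * (of_int n * mon j u' v') = of_int n * (mon i u v * mon j u' v')"
    by (simp only: mult.assoc[symmetric] mult_of_int_commute[of n "mon i u v", symmetric])
  then have "mon i u v * (y + of_int n * mon j u' v')
      = mon i u v * y + of_int n * mon (i + j - 2 * v * u') (u + u') (v + v')"
    by (simp only: distrib_left mon_mult)
  then show ?case using add_mon assms(2) by (simp add: mon_span.add_mon)
qed (simp add: mon_span.zero)

lemma mon_span_mult:
  assumes "x \<in> mon_span A" and "y \<in> mon_span B"
    and "\<And>u v u' v'. (u, v) \<in> A \<Longrightarrow> (u', v') \<in> B \<Longrightarrow> (u + u', v + v') \<in> C"
  shows "x * y \<in> mon_span C"
  using assms(1)
proof (induction x rule: mon_span.induct)
  case (add_mon x u v n i)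
  have "(x + of_int n * mon i u v) * y = x * y + of_int n * (mon i u v * y)"
    by (simp only: distrib_right mult.assoc)
  then show ?case
    using add_mon assms(2,3) by (simp add: mon_span_add mon_span_of_int_mult mon_mult_mon_span)
qed (simp add: mon_span.zero)

lemma Q_powi_mult_mon_span: "x \<in> mon_span A \<Longrightarrow> Q powi k * x \<in> mon_span A"
  using mon_mult_mon_span[where y = x and B = A and C = A and i = k and u = 0 and v = 0]
  by (simp add: mon_def)

lemma mon_span_repr:
  assumes "x \<in> mon_span A"
  obtains S f where "finite S" and "\<And>p. f p \<noteq> 0 \<Longrightarrow> p \<in> S"
    and "\<And>i u v. f (i, u, v) \<noteq> 0 \<Longrightarrow> (u, v) \<in> A"
    and "x = (\<Sum>(i, u, v)\<in>S. of_int (f (i, u, v)) * mon i u v)"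
proof -
  have "\<exists>S f. finite S \<and> (\<forall>p. f p \<noteq> 0 \<longrightarrow> p \<in> S)
      \<and> (\<forall>i u v. f (i, u, v) \<noteq> 0 \<longrightarrow> (u, v) \<in> A)
      \<and> x = (\<Sum>(i, u, v)\<in>S. of_int (f (i, u, v)) * mon i u v)"
    using assms
  proof (induction x rule: mon_span.induct)
    case zero
    show ?case by (rule exI[of _ "{}"], rule exI[of _ "\<lambda>_. 0"]) simp
  next
    case (add_mon x u v n i)
    then obtain S f where fin: "finite S" and supp: "\<forall>p. f p \<noteq> 0 \<longrightarrow> p \<in> S"
      and exps: "\<forall>i u v. f (i, u, v) \<noteq> 0 \<longrightarrow> (u, v) \<in> A"
      and x: "x = (\<Sum>(i, u, v)\<in>S. of_int (f (i, u, v)) * mon i u v)" by blast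
    let ?m = "\<lambda>f. \<lambda>(i, u, v). of_int (f (i, u, v)) * mon i u v"
    define f' where "f' = f((i, u, v) := f (i, u, v) + n)"
    have "sum (?m f') (insert (i, u, v) S)
        = sum (?m f) (insert (i, u, v) S) + sum (\<lambda>p. if p = (i, u, v) then of_int n * mon i u v else 0)
            (insert (i, u, v) S)"
      unfolding sum.distrib[symmetric] by (rule sum.cong) (auto simp: f'_def distrib_right split: if_splits)
    also have "sum (?m f) (insert (i, u, v) S) = sum (?m f) S"
    proof (cases "(i, u, v) \<in> S")
      case False
      then have "f (i, u, v) = 0" using supp by blast
      with False fin show ?thesis by simp
    qed (simp add: insert_absorb)
    finally have "x + of_int n * mon i u v = sum (?m f') (insert (i, u, v) S)"
      using fin x by simp
    moreover have "\<forall>p. f' p \<noteq> 0 \<longrightarrow> p \<in> insert (i, u, v) S" using supp by (simp add: f'_def)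
    moreover have "\<forall>i' u' v'. f' (i', u', v') \<noteq> 0 \<longrightarrow> (u', v') \<in> A"
      using exps add_mon.hyps(2) by (simp add: f'_def)
    ultimately show ?case using fin by blast
  qed
  then show ?thesis using that by blast
qed

lemma mon_coeff_eq_zero_if_not_in_span:
  assumes fin: "finite J" and span: "(\<Sum>j\<in>J. of_int (h j) * mon j u v) \<in> mon_span A"
    and "(u, v) \<notin> A" and "j \<in> J"
  shows "h j = 0"
proof -
  let ?z = "\<Sum>j\<in>J. of_int (h j) * mon j u v"
  obtain S f where finS: "finite S" and supp: "\<And>p. f p \<noteq> 0 \<Longrightarrow> p \<in> S"
    and exps: "\<And>i u v. f (i, u, v) \<noteq> 0 \<Longrightarrow> (u, v) \<in> A"
    and z: "?z = (\<Sum>(i, u, v)\<in>S. of_int (f (i, u, v)) * mon i u v)"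
    using mon_span_repr[OF span] by blast
  define g where "g = (\<lambda>(i, u', v'). if (u', v') = (u, v) \<and> i \<in> J then h i else 0)"
  define T where "T = S \<union> (\<lambda>j. (j, u, v)) ` J"
  have finT: "finite T" using finS fin by (simp add: T_def)
  have "(\<Sum>(i, u', v')\<in>T. of_int (g (i, u', v')) * mon i u' v')
      = (\<Sum>(i, u', v')\<in>(\<lambda>j. (j, u, v)) ` J. of_int (g (i, u', v')) * mon i u' v')"
    by (rule sum.mono_neutral_right) (use finT in \<open>auto simp: T_def g_def\<close>)
  also have "\<dots> = ?z"
    by (subst sum.reindex) (auto intro: inj_onI simp: g_def)
  finally have g_sum: "(\<Sum>(i, u', v')\<in>T. of_int (g (i, u', v')) * mon i u' v') = ?z" .
  have f_sum: "(\<Sum>(i, u', v')\<in>T. of_int (f (i, u', v')) * mon i u' v') = ?z"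
  proof -
    have "\<And>p. p \<notin> S \<Longrightarrow> f p = 0" using supp by blast
    then show ?thesis
      unfolding z by (intro sum.mono_neutral_right) (auto simp: finS fin T_def)
  qed
  have "(\<Sum>(i, u', v')\<in>T. of_int ((g - f) (i, u', v')) * mon i u' v') = 0"
    using g_sum f_sum by (simp add: left_diff_distrib sum_subtractf case_prod_unfold)
  moreover have "(g - f) p = 0" if "p \<notin> T" for p
  proof -
    have "f p = 0" using that supp[of p] unfolding T_def by blast
    moreover have "g p = 0" using that by (cases p) (auto simp: g_def T_def)
    ultimately show ?thesis by simp
  qed
  ultimately have "(g - f) (j, u, v) = 0" using mon_independent[OF finT] by blast
  moreover have "f (j, u, v) = 0" using exps \<open>(u, v) \<notin> A\<close> by blast
  ultimately show ?thesis using \<open>j \<in> J\<close> by (simp add: g_def)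
qed

lemma mon_coeff_eq_zero_if_not_in_span_add:
  assumes "finite J" and "Q powi k * (\<Sum>j\<in>J. of_int (h j) * mon j u v) + r \<in> mon_span A"
    and "r \<in> mon_span A'" and "(u, v) \<notin> A \<union> A'" and "j \<in> J"
  shows "h j = 0"
proof -
  let ?z = "\<Sum>j\<in>J. of_int (h j) * mon j u v"
  have "Q powi k * ?z \<in> mon_span (A \<union> A')"
    using mon_span_diff[OF mon_span_mono[OF assms(2)] mon_span_mono[OF assms(3)]] by simp
  then have "Q powi (-k) * (Q powi k * ?z) \<in> mon_span (A \<union> A')" by (rule Q_powi_mult_mon_span)
  moreover have "Q powi (-k) * Q powi k = 1"
    using Q_neq_zero by (simp add: power_int_add[symmetric])
  ultimately have "?z \<in> mon_span (A \<union> A')" by (simp only: mult.assoc[symmetric] mult_1_left)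
  then show ?thesis by (rule mon_coeff_eq_zero_if_not_in_span[OF assms(1) _ assms(4,5)])
qed

(* x is Q^k X1^u X2^v plus monomials whose exponent (e1, e2) is larger in the lexicographic order
   on (s * e1, e2); for s = 1 and s = -1 this is the monomial of least resp. greatest X1-degree. *)
definition leading_mon :: "int \<Rightarrow> 'a \<Rightarrow> int \<Rightarrow> int \<Rightarrow> bool" where
  "leading_mon s x u v \<longleftrightarrow>
     (\<exists>k. x - mon k u v \<in> mon_span {(e1, e2). (s * u, v) < (s * e1, e2)})"

lemma leading_mon_mon: "leading_mon s (mon k u v) u v"
  unfolding leading_mon_def by (intro exI[of _ k]) (simp add: mon_span.zero)

lemma leading_mon_add_mon:
  assumes "(s * u, v) < (s * u', v')"
  shows "leading_mon s (mon k u v + mon k' u' v') u v"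
  unfolding leading_mon_def using assms by (intro exI[of _ k]) (simp add: mon_in_mon_span)

lemma leading_mon_mult:
  assumes "leading_mon s x u v" and "leading_mon s y u' v'"
  shows "leading_mon s (x * y) (u + u') (v + v')"
proof -
  let ?above = "\<lambda>u v. {(e1, e2). (s * u, v) < (s * e1, e2)}"
  obtain k k' where x: "x - mon k u v \<in> mon_span (?above u v)"
    and y: "y - mon k' u' v' \<in> mon_span (?above u' v')"
    using assms unfolding leading_mon_def by blast
  define m m' where "m = mon k u v" and "m' = mon k' u' v'"
  have "x * y - mon (k + k' - 2 * v * u') (u + u') (v + v')
      = m * (y - m') + (x - m) * m' + (x - m) * (y - m')"
    unfolding m_def m'_def mon_mult[symmetric] by (simp add: algebra_simps)
  moreover have "m * (y - m') \<in> mon_span (?above (u + u') (v + v'))"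
    unfolding m_def m'_def using y by (rule mon_mult_mon_span) (auto simp: distrib_left)
  moreover have "(x - m) * m' \<in> mon_span (?above (u + u') (v + v'))"
    using x mon_in_mon_span[of u' v' "{(u', v')}"] unfolding m_def m'_def
    by (rule mon_span_mult) (auto simp: distrib_left)
  moreover have "(x - m) * (y - m') \<in> mon_span (?above (u + u') (v + v'))"
    using x y unfolding m_def m'_def by (rule mon_span_mult) (auto simp: distrib_left)
  ultimately show ?thesis unfolding leading_mon_def by (metis mon_span_add)
qed

lemma leading_mon_power:
  assumes "leading_mon s x u v"
  shows "leading_mon s (x ^ n) (int n * u) (int n * v)"
proof (induction n)
  case 0
  show ?case using leading_mon_mon[of s 0 0 0] by (simp add: mon_def)
next
  case (Suc n)
  from leading_mon_mult[OF assms Suc] show ?case by (simp add: algebra_simps)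
qed

lemma leading_mon_Q_powi: "leading_mon s (Q powi k) 0 0"
  using leading_mon_mon[of s k 0 0] by (simp add: mon_def)

lemma leading_mon_X1: "leading_mon s X1 1 0"
  using leading_mon_mon[of s 0 1 0] by (simp add: mon_def)

lemma leading_mon_X2: "leading_mon s X2 0 1"
  using leading_mon_mon[of s 0 0 1] by (simp add: mon_def)

lemma leading_mon_in_mon_span_above:
  assumes "leading_mon s x u v" and "(s * u', v') < (s * u, v)"
  shows "x \<in> mon_span {(e1, e2). (s * u', v') < (s * e1, e2)}"
proof -
  obtain k where k: "x - mon k u v \<in> mon_span {(e1, e2). (s * u, v) < (s * e1, e2)}"
    using assms(1) unfolding leading_mon_def by blast
  have "mon k u v + (x - mon k u v) \<in> mon_span {(e1, e2). (s * u', v') < (s * e1, e2)}"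
    using assms(2) by (intro mon_span_add mon_in_mon_span mon_span_mono[OF k]) auto
  then show ?thesis by simp
qed

lemma sum_split_leading_block:
  fixes g :: "int \<Rightarrow> int \<Rightarrow> int \<Rightarrow> int" and F :: "int \<Rightarrow> int \<Rightarrow> 'a"
  assumes "finite S"
    and lead: "\<And>c d. leading_mon s (F c d) (u c d) d"
    and below: "\<And>c d i. (c, d, i) \<in> S \<Longrightarrow> (c, d) \<noteq> (c', d') \<Longrightarrow> (s * u c' d', d') < (s * u c d, d)"
  obtains k r where
    "(\<Sum>(c, d, i)\<in>S. of_int (g c d i) * Q powi i * F c d)
       = Q powi k * (\<Sum>i\<in>{i. (c', d', i) \<in> S}. of_int (g c' d' i) * mon i (u c' d') d') + r"
    and "r \<in> mon_span {(e1, e2). (s * u c' d', d') < (s * e1, e2)}"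
proof -
  define u0 where "u0 = u c' d'"
  define above where "above = {(e1, e2). (s * u0, d') < (s * e1, e2)}"
  obtain k where k: "F c' d' - mon k u0 d' \<in> mon_span above"
    using lead[of c' d'] unfolding leading_mon_def u0_def above_def by blast
  define J where "J = {i. (c', d', i) \<in> S}"
  define T where "T = (\<lambda>(c, d, i). of_int (g c d i) * Q powi i * F c d)"
  define D where
    "D = (\<lambda>(c, d, i). if (c, d) = (c', d') then of_int (g c d i) * mon (i + k) u0 d' else 0)"
  have rest: "T t - D t \<in> mon_span above" if "t \<in> S" for t
  proof -
    obtain c d i where t: "t = (c, d, i)" by (cases t)
    show ?thesis
    proof (cases "(c, d) = (c', d')")
      case True
      then have "c = c'" "d = d'" by simp_all
      then have "T t - D t = of_int (g c' d' i) * (Q powi i * (F c' d' - mon k u0 d'))"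
        by (simp add: t T_def D_def Q_powi_mult_mon[symmetric] right_diff_distrib mult.assoc)
      then show ?thesis using k by (simp add: mon_span_of_int_mult Q_powi_mult_mon_span)
    next
      case False
      then have "F c d \<in> mon_span above"
        using below[of c d i] that unfolding above_def u0_def t
        by (intro leading_mon_in_mon_span_above[OF lead]) simp
      moreover have "D t = 0" using False by (auto simp: t D_def)
      ultimately show ?thesis
        by (simp add: t T_def mult.assoc mon_span_of_int_mult Q_powi_mult_mon_span)
    qed
  qed
  have "sum D S = sum D ((\<lambda>i. (c', d', i)) ` J)"
    using \<open>finite S\<close> by (intro sum.mono_neutral_right) (auto simp: J_def D_def)
  also have "\<dots> = (\<Sum>i\<in>J. of_int (g c' d' i) * mon (i + k) u0 d')"
    by (simp add: sum.reindex inj_on_def D_def)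
  also have "\<dots> = Q powi k * (\<Sum>i\<in>J. of_int (g c' d' i) * mon i u0 d')"
    unfolding sum_distrib_left
  proof (rule sum.cong)
    fix i
    have "Q powi k * (of_int (g c' d' i) * mon i u0 d') = of_int (g c' d' i) * (Q powi k * mon i u0 d')"
      by (simp only: mult.assoc[symmetric] mult_of_int_commute[of _ "Q powi k"])
    then show "of_int (g c' d' i) * mon (i + k) u0 d' = Q powi k * (of_int (g c' d' i) * mon i u0 d')"
      by (simp add: Q_powi_mult_mon add.commute)
  qed simp
  finally have "sum T S
      = Q powi k * (\<Sum>i\<in>J. of_int (g c' d' i) * mon i u0 d') + sum (\<lambda>t. T t - D t) S"
    by (simp add: sum_subtractf)
  moreover have "sum (\<lambda>t. T t - D t) S \<in> mon_span above"
    using rest \<open>finite S\<close> by (rule mon_span_sum[rotated])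
  ultimately show ?thesis using that unfolding T_def J_def above_def u0_def by blast
qed

lemma extreme_leading_exponent_in_mon_span:
  fixes g :: "int \<Rightarrow> int \<Rightarrow> int \<Rightarrow> int" and F :: "int \<Rightarrow> int \<Rightarrow> 'a" and u :: "int \<Rightarrow> int \<Rightarrow> int"
  assumes fin: "finite {(c, d, i). g c d i \<noteq> 0}"
    and lead: "\<And>c d. leading_mon s (F c d) (u c d) d"
    and inj: "\<And>c c' d. s * u c d = s * u c' d \<Longrightarrow> c = c'"
    and span: "(\<Sum>(c, d, i)\<in>{(c, d, i). g c d i \<noteq> 0}. of_int (g c d i) * Q powi i * F c d)
      \<in> mon_span B"
    and "g c1 d1 i1 \<noteq> 0"
  shows "\<exists>c0 d0. (\<exists>i. g c0 d0 i \<noteq> 0) \<and> (u c0 d0, d0) \<in> B \<and>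
           (\<forall>c d. (\<exists>i. g c d i \<noteq> 0) \<longrightarrow> s * u c0 d0 \<le> s * u c d)"
proof -
  define S where "S = {(c, d, i). g c d i \<noteq> 0}"
  define P where "P = {(c, d). \<exists>i. g c d i \<noteq> 0}"
  define key where "key = (\<lambda>(c, d). (s * u c d, d))"
  have "P = (\<lambda>(c, d, i). (c, d)) ` S" by (force simp: P_def S_def image_iff)
  then have "finite P" using fin by (simp add: S_def)
  moreover have "P \<noteq> {}" using assms(5) by (auto simp: P_def)
  moreover obtain c0 d0 where p0: "arg_min_on key P = (c0, d0)" by (cases "arg_min_on key P")
  ultimately have c0d0: "(c0, d0) \<in> P" and least: "\<And>p. p \<in> P \<Longrightarrow> key (c0, d0) \<le> key p"
    using arg_min_if_finite(1)[of P key] arg_min_least[of P _ key] by auto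
  have below: "(s * u c0 d0, d0) < (s * u c d, d)"
    if "(c, d, i) \<in> S" "(c, d) \<noteq> (c0, d0)" for c d i
  proof -
    have "(s * u c0 d0, d0) \<le> (s * u c d, d)"
      using least[of "(c, d)"] that by (auto simp: key_def P_def S_def)
    moreover have "(s * u c0 d0, d0) \<noteq> (s * u c d, d)" using inj[of c0 d0 c] that(2) by auto
    ultimately show ?thesis by (rule order_le_neq_trans)
  qed
  obtain k r where split: "(\<Sum>(c, d, i)\<in>S. of_int (g c d i) * Q powi i * F c d)
       = Q powi k * (\<Sum>i\<in>{i. (c0, d0, i) \<in> S}. of_int (g c0 d0 i) * mon i (u c0 d0) d0) + r"
    and r: "r \<in> mon_span {(e1, e2). (s * u c0 d0, d0) < (s * e1, e2)}"
  proof (rule sum_split_leading_block[where S = S and g = g and F = F and u = u and s = s and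
        c' = c0 and d' = d0])
    show "finite S" using fin by (simp add: S_def)
  qed (use lead below in auto)
  have "(u c0 d0, d0) \<in> B"
  proof (rule ccontr)
    assume "(u c0 d0, d0) \<notin> B"
    then have notin: "(u c0 d0, d0) \<notin> B \<union> {(e1, e2). (s * u c0 d0, d0) < (s * e1, e2)}" by simp
    obtain i where i: "(c0, d0, i) \<in> S" using c0d0 by (auto simp: P_def S_def)
    have fin_block: "finite {i. (c0, d0, i) \<in> S}"
      by (rule finite_imageD[of "\<lambda>i. (c0, d0, i)"], rule finite_subset[OF _ fin])
        (auto simp: S_def inj_on_def)
    have "g c0 d0 i = 0"
      using mon_coeff_eq_zero_if_not_in_span_add[OF fin_block _ r notin] i
        span[folded S_def, unfolded split] by blast
    then show False using i by (simp add: S_def)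
  qed
  moreover have "s * u c0 d0 \<le> s * u c d" if "\<exists>i. g c d i \<noteq> 0" for c d
    using least[of "(c, d)"] that by (auto simp: key_def P_def)
  ultimately show ?thesis using c0d0 unfolding P_def by blast
qed

definition lowest_x1_part :: "'a \<Rightarrow> 'a \<Rightarrow> int \<Rightarrow> int \<Rightarrow> bool" where
  "lowest_x1_part x w lo hi \<longleftrightarrow> lo \<le> hi \<and> w \<in> mon_span {(e1, e2). e1 = lo} \<and>
     x - w \<in> mon_span {(e1, e2). lo < e1 \<and> e1 \<le> hi}"

lemma lowest_x1_part_mon_span:
  assumes "lowest_x1_part x w lo hi"
  shows "x \<in> mon_span {(e1, e2). lo \<le> e1 \<and> e1 \<le> hi}"
proof -
  have "w + (x - w) \<in> mon_span {(e1, e2). lo \<le> e1 \<and> e1 \<le> hi}"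
    using assms unfolding lowest_x1_part_def
    by (intro mon_span_add) (auto elim!: mon_span_mono)
  then show ?thesis by simp
qed

lemma lowest_x1_part_mult:
  assumes "lowest_x1_part x w lo hi" and "lowest_x1_part x' w' lo' hi'"
  shows "lowest_x1_part (x * x') (w * w') (lo + lo') (hi + hi')"
proof -
  have w: "w \<in> mon_span {(e1, e2). e1 = lo}" and r: "x - w \<in> mon_span {(e1, e2). lo < e1 \<and> e1 \<le> hi}"
    and w': "w' \<in> mon_span {(e1, e2). e1 = lo'}"
    and r': "x' - w' \<in> mon_span {(e1, e2). lo' < e1 \<and> e1 \<le> hi'}"
    using assms unfolding lowest_x1_part_def by auto
  have x': "x' \<in> mon_span {(e1, e2). lo' \<le> e1 \<and> e1 \<le> hi'}"
    using assms(2) by (rule lowest_x1_part_mon_span)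
  have "x * x' - w * w' = (x - w) * x' + w * (x' - w')" by (simp add: algebra_simps)
  also have "\<dots> \<in> mon_span {(e1, e2). lo + lo' < e1 \<and> e1 \<le> hi + hi'}"
    using assms unfolding lowest_x1_part_def
    by (intro mon_span_add mon_span_mult[OF r x'] mon_span_mult[OF w r']) auto
  finally show ?thesis
    using assms mon_span_mult[OF w w'] unfolding lowest_x1_part_def by auto
qed

lemma lowest_x1_part_power:
  assumes "lowest_x1_part x w lo hi"
  shows "lowest_x1_part (x ^ n) (w ^ n) (int n * lo) (int n * hi)"
proof (induction n)
  case 0
  have "1 \<in> mon_span {(e1, e2). e1 = 0}"
    using mon_in_mon_span[of 0 0 _ 0] by (simp add: mon_def)
  then show ?case by (simp add: lowest_x1_part_def mon_span.zero)
next
  case (Suc n)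
  from lowest_x1_part_mult[OF assms Suc] show ?case by (simp add: algebra_simps)
qed

lemma lowest_x1_part_self: "x \<in> mon_span {(e1, e2). e1 = lo} \<Longrightarrow> lowest_x1_part x x lo lo"
  unfolding lowest_x1_part_def by (simp add: mon_span.zero)

lemma lowest_x1_part_Q_powi: "lowest_x1_part (Q powi k) (Q powi k) 0 0"
  using mon_in_mon_span[of 0 0 _ k] by (intro lowest_x1_part_self) (simp add: mon_def)

lemma lowest_x1_part_X1: "lowest_x1_part X1 X1 1 1"
  using mon_in_mon_span[of 1 0 _ 0] by (intro lowest_x1_part_self) (simp add: mon_def)

lemma lowest_x1_part_X2: "lowest_x1_part X2 X2 0 0"
  using mon_in_mon_span[of 0 1 _ 0] by (intro lowest_x1_part_self) (simp add: mon_def)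

end

locale rank2_cluster = quantum_torus Q "X 1" "X 2"
  for Q :: "'a::division_ring" and X :: "int \<Rightarrow> 'a" +
  assumes exchange: "cluster_seq Q X"
begin

lemma exchange_relations:
  "X 0 * X 2 = Q * X 1 + 1" "X 1 * X 3 = Q ^ 4 * X 2 ^ 4 + 1" "X 2 * X 4 = Q * X 3 + 1"
proof -
  have odd: "X (k - 1) * X (k + 1) = Q * X k + 1" if "odd k" for k
    using exchange that unfolding cluster_seq_def by blast
  have even: "X (k - 1) * X (k + 1) = Q ^ 4 * X k ^ 4 + 1" if "even k" for k
    using exchange that unfolding cluster_seq_def by blast
  show "X 0 * X 2 = Q * X 1 + 1" using odd[of 1] by simp
  show "X 1 * X 3 = Q ^ 4 * X 2 ^ 4 + 1" using even[of 2] by simp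
  show "X 2 * X 4 = Q * X 3 + 1" using odd[of 3] by simp
qed

lemma X0_eq: "X 0 = mon 1 1 (-1) + mon 0 0 (-1)"
proof -
  have "X 0 = (X 0 * X 2) * inverse (X 2)" using X2_neq_zero by (simp add: mult.assoc)
  also have "\<dots> = Q * X 1 * inverse (X 2) + inverse (X 2)"
    by (simp only: exchange_relations(1) distrib_right mult_1_left)
  finally show ?thesis by (simp add: mon_def)
qed

lemma X3_eq: "X 3 = mon 0 (-1) 0 + mon 4 (-1) 4"
proof -
  have "X 3 = inverse (X 1) * (X 1 * X 3)" using X1_neq_zero by (simp add: mult.assoc[symmetric])
  also have "\<dots> = inverse (X 1) * (Q ^ 4 * X 2 ^ 4) + inverse (X 1)"
    by (simp only: exchange_relations(2) distrib_left mult_1_right)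
  also have "inverse (X 1) * (Q ^ 4 * X 2 ^ 4) = Q powi 4 * inverse (X 1) * X 2 powi 4"
    using Q_powi_central[of 4 "inverse (X 1)"] by (simp add: mult.assoc[symmetric])
  finally show ?thesis by (simp add: mon_def add.commute)
qed

lemma X4_eq: "X 4 = mon 0 0 (-1) * (Q * X 3) + mon 0 0 (-1)"
proof -
  have "X 4 = inverse (X 2) * (X 2 * X 4)" using X2_neq_zero by (simp add: mult.assoc[symmetric])
  also have "\<dots> = inverse (X 2) * (Q * X 3) + inverse (X 2)"
    by (simp only: exchange_relations(3) distrib_left mult_1_right)
  finally show ?thesis by (simp add: mon_def)
qed

lemma leading_mon_X3: "leading_mon s (X 3) (-1) 0"
  unfolding X3_eq by (rule leading_mon_add_mon) simp

lemma leading_mon_X0_pos: "s > 0 \<Longrightarrow> leading_mon s (X 0) 0 (-1)"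
  unfolding X0_eq by (subst add.commute) (rule leading_mon_add_mon, simp)

lemma leading_mon_X0_neg: "s < 0 \<Longrightarrow> leading_mon s (X 0) 1 (-1)"
  unfolding X0_eq by (rule leading_mon_add_mon) simp

lemma leading_mon_stdmon:
  assumes "leading_mon s (X 0) u0 (-1)"
  shows "leading_mon s (stdmon Q X c d)
    (int (posp c) - int (posp (-c)) + int (posp (-d)) * u0) (int (posp d) - int (posp (-d)))"
proof -
  have "leading_mon s (stdmon Q X c d)
    (0 + int (posp (-c)) * (-1) + int (posp c) * 1 + int (posp d) * 0 + int (posp (-d)) * u0)
    (0 + int (posp (-c)) * 0 + int (posp c) * 0 + int (posp d) * 1 + int (posp (-d)) * (-1))"
    unfolding stdmon_def
    by (intro leading_mon_mult leading_mon_power leading_mon_Q_powi leading_mon_X1 leading_mon_X2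
        leading_mon_X3 assms)
  then show ?thesis by (simp add: algebra_simps)
qed

lemma leading_mon_stdmon_pos: "s > 0 \<Longrightarrow> leading_mon s (stdmon Q X c d) c d"
  using leading_mon_stdmon[OF leading_mon_X0_pos, of s c d] by (simp add: posp_diff)

lemma leading_mon_stdmon_neg: "s < 0 \<Longrightarrow> leading_mon s (stdmon Q X c d) (c + int (posp (-d))) d"
  using leading_mon_stdmon[OF leading_mon_X0_neg, of s c d] by (simp add: posp_diff)

lemma X3_in_mon_span: "X 3 \<in> mon_span {(e1, e2). e1 = -1}"
  unfolding X3_eq by (intro mon_span_add mon_in_mon_span) auto

lemma lowest_x1_part_X3: "lowest_x1_part (X 3) (X 3) (-1) (-1)"
  by (rule lowest_x1_part_self[OF X3_in_mon_span])

lemma lowest_x1_part_X0: "lowest_x1_part (X 0) (mon 0 0 (-1)) 0 1"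
  unfolding lowest_x1_part_def X0_eq by (auto intro: mon_in_mon_span)

lemma lowest_x1_part_X4: "lowest_x1_part (X 4) (mon 0 0 (-1) * (Q * X 3)) (-1) 0"
proof -
  have "Q * X 3 \<in> mon_span {(e1, e2). e1 = -1}"
    using Q_powi_mult_mon_span[OF X3_in_mon_span, of 1] by simp
  then have "mon 0 0 (-1) * (Q * X 3) \<in> mon_span {(e1, e2). e1 = -1}"
    by (rule mon_mult_mon_span) auto
  moreover have "X 4 - mon 0 0 (-1) * (Q * X 3) \<in> mon_span {(e1, e2). -1 < e1 \<and> e1 \<le> 0}"
    unfolding X4_eq by (simp add: mon_in_mon_span)
  ultimately show ?thesis unfolding lowest_x1_part_def by simp
qed

lemma lowest_x1_part_stdmon:
  "lowest_x1_part (stdmon Q X c d)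
     (Q powi (- (c * d)) * X 3 ^ posp (- c) * X 1 ^ posp c * X 2 ^ posp d * mon 0 0 (-1) ^ posp (- d))
     c (c + int (posp (- d)))"
proof -
  have "lowest_x1_part (stdmon Q X c d)
     (Q powi (- (c * d)) * X 3 ^ posp (- c) * X 1 ^ posp c * X 2 ^ posp d * mon 0 0 (-1) ^ posp (- d))
     (0 + int (posp (-c)) * (-1) + int (posp c) * 1 + int (posp d) * 0 + int (posp (-d)) * 0)
     (0 + int (posp (-c)) * (-1) + int (posp c) * 1 + int (posp d) * 0 + int (posp (-d)) * 1)"
    unfolding stdmon_def
    by (intro lowest_x1_part_mult lowest_x1_part_power lowest_x1_part_Q_powi lowest_x1_part_X1
        lowest_x1_part_X2 lowest_x1_part_X3 lowest_x1_part_X0)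
  then show ?thesis using posp_diff[of c] by (simp add: algebra_simps)
qed

lemma X2_inverse_X3_power: "mon 0 0 (-1) * X 3 ^ k = Q powi (-2 * int k) * (X 3 ^ k * mon 0 0 (-1))"
proof -
  have "mon 0 0 (-1) * X 3 = Q powi (-2) * (X 3 * mon 0 0 (-1))"
    by (simp add: X3_eq distrib_left distrib_right mon_mult Q_powi_mult_mon)
  from skew_commute_power[OF this Q_powi_central] show ?thesis by (simp add: power_int_power')
qed

lemma lowest_x1_parts_cancel:
  fixes m n :: nat
  defines "Y \<equiv> mon 0 0 (-1)"
  shows "Q powi (int m - int n) * (Y * (Q * X 3)) * (Q powi (- (int m * int n)) * X 3 ^ m * Y ^ n)
    = Q powi (- ((int m + 1) * (int n + 1))) * X 3 ^ Suc m * Y ^ Suc n"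
proof -
  have "Q powi (int m - int n) * (Y * (Q * X 3)) * (Q powi (- (int m * int n)) * X 3 ^ m * Y ^ n)
      = Q powi (int m - int n) * Q * Q powi (- (int m * int n)) * ((Y * X 3 ^ Suc m) * Y ^ n)"
    by (simp only: mult.assoc[symmetric] Q_central[of Y, symmetric])
      (simp only: mult.assoc mult_Q_powi_left_commute[of "X 3" "- (int m * int n)"]
        mult_Q_powi_left_commute[of Y "- (int m * int n)"] power_Suc)
  also have "Y * X 3 ^ Suc m = Q powi (-2 * int (Suc m)) * (X 3 ^ Suc m * Y)"
    unfolding Y_def by (rule X2_inverse_X3_power)
  also have "Q powi (int m - int n) * Q * Q powi (- (int m * int n))
      * (Q powi (-2 * int (Suc m)) * (X 3 ^ Suc m * Y) * Y ^ n)
    = Q powi (int m - int n + 1) * Q powi (- (int m * int n)) * Q powi (-2 * int (Suc m))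
      * X 3 ^ Suc m * Y ^ Suc n"
    by (simp only: power_int_add_1[OF disjI1[OF Q_neq_zero]] mult.assoc power_Suc)
  also have "Q powi (int m - int n + 1) * Q powi (- (int m * int n)) * Q powi (-2 * int (Suc m))
      = Q powi (- ((int m + 1) * (int n + 1)))"
    by (simp only: generator_powi_add[symmetric]) (simp add: algebra_simps)
  finally show ?thesis .
qed

lemma exchange_lowest_x1_parts_cancel:
  fixes a b :: int
  defines "Y \<equiv> mon 0 0 (-1)"
  assumes "a \<le> 0" and "b \<le> 0"
  shows "Q powi (- (a - b)) * (Y * (Q * X 3))
      * (Q powi (- (a * b)) * X 3 ^ posp (- a) * X 1 ^ posp a * X 2 ^ posp b * Y ^ posp (- b))
    = Q powi (- ((a - 1) * (b - 1))) * X 3 ^ posp (- (a - 1)) * X 1 ^ posp (a - 1)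
      * X 2 ^ posp (b - 1) * Y ^ posp (- (b - 1))"
proof -
  obtain m n where a: "a = - int m" and b: "b = - int n"
    using assms(2,3) by (metis add.inverse_inverse neg_0_le_iff_le nonneg_int_cases)
  have "posp (- a) = m" "posp a = 0" "posp b = 0" "posp (- b) = n"
    "posp (- (a - 1)) = Suc m" "posp (a - 1) = 0" "posp (b - 1) = 0" "posp (- (b - 1)) = Suc n"
    by (simp_all add: a b posp_def nat_add_distrib)
  moreover have "- (a - b) = int m - int n" "- (a * b) = - (int m * int n)"
    "(a - 1) * (b - 1) = (int m + 1) * (int n + 1)" by (simp_all add: a b algebra_simps)
  ultimately show ?thesis using lowest_x1_parts_cancel[of m n] unfolding Y_def by simp
qed

lemma exchange_difference_x1_degrees:
  assumes "b \<le> 0"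
  shows "Q powi (- (a - b)) * X 4 * stdmon Q X a b - stdmon Q X (a - 1) (b - 1)
     \<in> mon_span {(e1, e2). (if a > 0 then a - 1 else a) \<le> e1 \<and> e1 \<le> a - b}"
proof -
  let ?Y = "mon 0 0 (-1)"
  let ?w1 = "Q powi (- (a - b)) * (?Y * (Q * X 3)) * (Q powi (- (a * b)) * X 3 ^ posp (- a)
      * X 1 ^ posp a * X 2 ^ posp b * ?Y ^ posp (- b))"
  let ?w2 = "Q powi (- ((a - 1) * (b - 1))) * X 3 ^ posp (- (a - 1)) * X 1 ^ posp (a - 1)
      * X 2 ^ posp (b - 1) * ?Y ^ posp (- (b - 1))"
  have posp_b: "int (posp (- b)) = - b" "int (posp (1 - b)) = 1 - b"
    using assms by (simp_all add: posp_def)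
  have first: "lowest_x1_part (Q powi (- (a - b)) * X 4 * stdmon Q X a b) ?w1 (a - 1) (a - b)"
    using lowest_x1_part_mult[OF lowest_x1_part_mult[OF lowest_x1_part_Q_powi lowest_x1_part_X4]
        lowest_x1_part_stdmon, of "- (a - b)" a b]
    by (simp add: posp_b mult.assoc)
  have second: "lowest_x1_part (stdmon Q X (a - 1) (b - 1)) ?w2 (a - 1) (a - b)"
    using lowest_x1_part_stdmon[of "a - 1" "b - 1"] by (simp add: posp_b)
  show ?thesis
  proof (cases "a > 0")
    case True
    then show ?thesis
      using mon_span_diff[OF lowest_x1_part_mon_span[OF first] lowest_x1_part_mon_span[OF second]]
      by simp
  next
    case False
    then have "?w1 = ?w2" using assms by (intro exchange_lowest_x1_parts_cancel) simp_all
    then have "Q powi (- (a - b)) * X 4 * stdmon Q X a b - stdmon Q X (a - 1) (b - 1)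
        = (Q powi (- (a - b)) * X 4 * stdmon Q X a b - ?w1) - (stdmon Q X (a - 1) (b - 1) - ?w2)"
      by simp
    also have "\<dots> \<in> mon_span {(e1, e2). a - 1 < e1 \<and> e1 \<le> a - b}"
      using first second unfolding lowest_x1_part_def by (blast intro: mon_span_diff)
    finally show ?thesis by (rule mon_span_mono) (use False in auto)
  qed
qed

end

theorem lemma4p6:
  fixes Q :: "'a::division_ring" and X :: "int \<Rightarrow> 'a"
    and a b :: int and g :: "int \<Rightarrow> int \<Rightarrow> int \<Rightarrow> int"
  assumes torus: "quantum_torus_gens Q (X 1) (X 2)"
    and seq: "cluster_seq Q X"
    and hb: "b \<le> 0"
    and fin: "finite {(c, d, i). g c d i \<noteq> 0}"
    and expansion:
      "Q powi (- (a - b)) * X 4 * stdmon Q X a b - stdmon Q X (a - 1) (b - 1)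
         = (\<Sum>(c, d, i)\<in>{(c, d, i). g c d i \<noteq> 0}. of_int (g c d i) * Q powi i * stdmon Q X c d)"
  shows "\<forall>c d. (\<exists>i. g c d i \<noteq> 0) \<longrightarrow>
           (if a > 0 then c \<ge> a - 1 else c \<ge> a) \<and>
           (if d \<ge> 0 then c \<le> a - b else c - d \<le> a - b)"
proof (intro allI impI)
  interpret rank2_cluster Q X
    using torus seq by (intro rank2_cluster.intro quantum_torus.intro rank2_cluster_axioms.intro)
  let ?B = "{(e1, e2). (if a > 0 then a - 1 else a) \<le> e1 \<and> e1 \<le> a - b}"
  have span: "(\<Sum>(c, d, i)\<in>{(c, d, i). g c d i \<noteq> 0}. of_int (g c d i) * Q powi i * stdmon Q X c d)
      \<in> mon_span ?B"
    using exchange_difference_x1_degrees[OF hb, of a] unfolding expansion .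
  fix c d assume "\<exists>i. g c d i \<noteq> 0"
  then obtain i where i: "g c d i \<noteq> 0" ..
  \<comment> \<open>s = 1 bounds the least X1-degree c from below, s = -1 the greatest one from above\<close>
  obtain c0 d0 where "(c0, d0) \<in> ?B" and "c0 \<le> c"
    using extreme_leading_exponent_in_mon_span[where s = 1 and u = "\<lambda>c d. c",
        OF fin leading_mon_stdmon_pos _ span i] i by auto
  moreover obtain c1 d1 where "(c1 + int (posp (- d1)), d1) \<in> ?B"
    and "c + int (posp (- d)) \<le> c1 + int (posp (- d1))"
    using extreme_leading_exponent_in_mon_span[where s = "-1" and u = "\<lambda>c d. c + int (posp (- d))",
        OF fin leading_mon_stdmon_neg _ span i] i by fastforce
  ultimately show "(if a > 0 then c \<ge> a - 1 else c \<ge> a) \<and>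
      (if d \<ge> 0 then c \<le> a - b else c - d \<le> a - b)"
    by (auto simp: posp_def split: if_splits)
qed

end
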